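(* Let $\phi\in L^\infty$. If the slant Hankel operator $L_\phi=WH_\phi$ on $H^2$ is a slant H-Toeplitz operator (i.e. $L_\phi=V_\psi$ for some $\psi\in L^\infty$), then $\phi\in(z+z^3H^\infty)^\perp$, where $z+z^3H^\infty=\{z+z^3\psi:\psi\in H^\infty\}$ and $\perp$ denotes the orthogonal complement in $L^2$.
   Context: $L^2=L^2(\mathbb{T})$ with orthonormal basis $e_n(z)=z^n$, $n\in\mathbb{Z}$; $H^2$ is the closed span of $\{e_n\}_{n\ge0}$, $H^\infty=H^2\cap L^\infty$, $P:L^2\to H^2$ the orthogonal projection, $M_\phi$ multiplication by $\phi$. $W:L^2\to L^2$: $We_n=e_{n/2}$ for $n$ even, $0$ for $n$ odd. $J:H^2\to L^2$, $Je_n=e_{-n-1}$ ($n\ge0$); $H_\phi=PM_\phi J$ is the Hankel operator and $L_\phi=WH_\phi$. $K:H^2\to L^2$: $Ke_{2n}=e_n$, $Ke_{2n+1}=e_{-n-1}$ ($n\ge0$). The slant H-Toeplitz operator with symbol $\psi$ is $V_\psi=WPM_\psi K:H^2\to H^2$. *)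

theory Defs
  imports "HOL-Analysis.Analysis"
begin

(* Functions on the unit circle T are represented by phi :: complex => complex,
   restricted to T via t |-> phi (cis t), t in [0, 2 pi], normalized Lebesgue measure. *)

definition Linf :: "(complex \<Rightarrow> complex) \<Rightarrow> bool" where
  "Linf phi \<longleftrightarrow> (\<lambda>t. phi (cis t)) \<in> borel_measurable (lebesgue_on {0..2*pi}) \<and>
     (\<exists>B. AE t in lebesgue_on {0..2*pi}. norm (phi (cis t)) \<le> B)"

definition fourier :: "(complex \<Rightarrow> complex) \<Rightarrow> int \<Rightarrow> complex" where
  "fourier phi n = (LINT t|lebesgue_on {0..2*pi}. phi (cis t) * cis (- (of_int n * t))) / (2 * pi)"

definition l2inner :: "(complex \<Rightarrow> complex) \<Rightarrow> (complex \<Rightarrow> complex) \<Rightarrow> complex" where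
  "l2inner f g = (LINT t|lebesgue_on {0..2*pi}. f (cis t) * cnj (g (cis t))) / (2 * pi)"

definition Hinf :: "(complex \<Rightarrow> complex) set" where
  "Hinf = {h. Linf h \<and> (\<forall>n<0. fourier h n = 0)}"

(* Elements of L^2 are identified with their coefficient sequences w.r.t. the
   orthonormal basis e_n (n in Z); H^2 = sequences supported on n >= 0. *)
definition l2seq :: "(int \<Rightarrow> complex) \<Rightarrow> bool" where
  "l2seq f \<longleftrightarrow> (\<lambda>n. (norm (f n))\<^sup>2) summable_on UNIV"

definition H2seq :: "(int \<Rightarrow> complex) \<Rightarrow> bool" where
  "H2seq f \<longleftrightarrow> l2seq f \<and> (\<forall>n<0. f n = 0)"

definition Mop :: "(complex \<Rightarrow> complex) \<Rightarrow> (int \<Rightarrow> complex) \<Rightarrow> (int \<Rightarrow> complex)" where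
  "Mop phi f = (\<lambda>n. \<Sum>\<^sub>\<infinity>k\<in>UNIV. fourier phi (n - k) * f k)"

definition Pop :: "(int \<Rightarrow> complex) \<Rightarrow> (int \<Rightarrow> complex)" where
  "Pop f = (\<lambda>n. if n \<ge> 0 then f n else 0)"

(* W e_n = e_{n/2} (n even), 0 (n odd) *)
definition Wop :: "(int \<Rightarrow> complex) \<Rightarrow> (int \<Rightarrow> complex)" where
  "Wop f = (\<lambda>n. f (2 * n))"

(* J e_n = e_{-n-1} *)
definition Jop :: "(int \<Rightarrow> complex) \<Rightarrow> (int \<Rightarrow> complex)" where
  "Jop f = (\<lambda>m. if m < 0 then f (- m - 1) else 0)"

(* K e_{2n} = e_n, K e_{2n+1} = e_{-n-1} *)
definition Kop :: "(int \<Rightarrow> complex) \<Rightarrow> (int \<Rightarrow> complex)" where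
  "Kop f = (\<lambda>m. if m \<ge> 0 then f (2 * m) else f (- 2 * m - 1))"

definition Hankel :: "(complex \<Rightarrow> complex) \<Rightarrow> (int \<Rightarrow> complex) \<Rightarrow> (int \<Rightarrow> complex)" where
  "Hankel phi f = Pop (Mop phi (Jop f))"

definition slantHankel :: "(complex \<Rightarrow> complex) \<Rightarrow> (int \<Rightarrow> complex) \<Rightarrow> (int \<Rightarrow> complex)" where
  "slantHankel phi f = Wop (Hankel phi f)"

definition slantHToeplitz :: "(complex \<Rightarrow> complex) \<Rightarrow> (int \<Rightarrow> complex) \<Rightarrow> (int \<Rightarrow> complex)" where
  "slantHToeplitz psi f = Wop (Pop (Mop psi (Kop f)))"

end

theory Submission
  imports Defs
begin

text \<open>
  Write \<open>a(n)\<close> and \<open>b(n)\<close> for the Fourier coefficients of \<open>\<phi>\<close> and \<open>\<psi>\<close>. Testing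
  \<open>L\<^sub>\<phi> = V\<^sub>\<psi>\<close> on the basis vectors \<open>e\<^sub>j\<close> of \<open>H\<^sup>2\<close> gives
  \<open>a(2m + 2k + 1) = b(2m - k)\<close> and \<open>a(2m + 2k + 2) = b(2m + k + 1)\<close>; eliminating \<open>b\<close>
  shows \<open>a(n) = a(1)\<close> for all \<open>n \<ge> 1\<close>. Pairing \<open>\<phi>\<close> with \<open>e\<^sub>1 + \<dots> + e\<^sub>N\<close> gives
  \<open>2\<pi> N a(1)\<close>, which Cauchy-Schwarz bounds by a multiple of \<open>\<surd>N\<close>, so \<open>a(1) = 0\<close>.
  Hence \<open>\<phi>\<close> is orthogonal to every \<open>e\<^sub>n\<close> with \<open>n \<ge> 1\<close>, while \<open>z + z\<^sup>3 h\<close> with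
  \<open>h \<in> H\<^sup>\<infinity>\<close> is orthogonal to every \<open>e\<^sub>n\<close> with \<open>n \<le> 0\<close>. Functions with complementary
  spectra are orthogonal because trigonometric polynomials are dense in \<open>L\<^sup>2\<close>; density
  follows from the a.e. approximation of measurable functions by continuous ones and
  Stone-Weierstrass on the circle.
\<close>

section \<open>Slant operators on the standard basis\<close>

definition basis_seq :: "int \<Rightarrow> int \<Rightarrow> complex" where
  "basis_seq j = (\<lambda>k. if k = j then 1 else 0)"

lemma H2seq_basis_seq:
  assumes "j \<ge> 0"
  shows "H2seq (basis_seq j)"
proof -
  have "(\<lambda>n. (norm (basis_seq j n))\<^sup>2) summable_on {j}"
    by simp
  then have "(\<lambda>n. (norm (basis_seq j n))\<^sup>2) summable_on UNIV"
    by (rule summable_on_cong_neutral[THEN iffD1, rotated -1]) (auto simp: basis_seq_def)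
  then show ?thesis
    using assms by (auto simp: H2seq_def l2seq_def basis_seq_def)
qed

lemma Mop_basis_seq: "Mop phi (basis_seq j) n = fourier phi (n - j)"
proof -
  have "Mop phi (basis_seq j) n = (\<Sum>\<^sub>\<infinity>k\<in>{j}. fourier phi (n - k) * basis_seq j k)"
    unfolding Mop_def by (rule infsum_cong_neutral) (auto simp: basis_seq_def)
  then show ?thesis by (simp add: basis_seq_def)
qed

lemma Jop_basis_seq: "j \<ge> 0 \<Longrightarrow> Jop (basis_seq j) = basis_seq (- j - 1)"
  by (auto simp: Jop_def basis_seq_def)

lemma Kop_basis_seq_even: "k \<ge> 0 \<Longrightarrow> Kop (basis_seq (2 * k)) = basis_seq k"
  unfolding Kop_def basis_seq_def fun_eq_iff by (auto; presburger)

lemma Kop_basis_seq_odd: "k \<ge> 0 \<Longrightarrow> Kop (basis_seq (2 * k + 1)) = basis_seq (- k - 1)"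
  unfolding Kop_def basis_seq_def fun_eq_iff by (auto; presburger)

lemma slantHankel_basis_seq:
  "j \<ge> 0 \<Longrightarrow> m \<ge> 0 \<Longrightarrow> slantHankel phi (basis_seq j) m = fourier phi (2 * m + j + 1)"
  by (simp add: slantHankel_def Hankel_def Wop_def Pop_def Jop_basis_seq Mop_basis_seq algebra_simps)

lemma slantHToeplitz_basis_seq_even:
  "k \<ge> 0 \<Longrightarrow> m \<ge> 0 \<Longrightarrow> slantHToeplitz psi (basis_seq (2 * k)) m = fourier psi (2 * m - k)"
  by (simp add: slantHToeplitz_def Wop_def Pop_def Kop_basis_seq_even Mop_basis_seq)

lemma slantHToeplitz_basis_seq_odd:
  "k \<ge> 0 \<Longrightarrow> m \<ge> 0 \<Longrightarrow> slantHToeplitz psi (basis_seq (2 * k + 1)) m = fourier psi (2 * m + k + 1)"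
  by (simp add: slantHToeplitz_def Wop_def Pop_def Kop_basis_seq_odd Mop_basis_seq) (simp add: algebra_simps)

lemma slant_relations_imp_constant:
  fixes a :: "int \<Rightarrow> 'a"
  assumes odd: "\<And>m k. 0 \<le> k \<Longrightarrow> k \<le> 2 * m \<Longrightarrow> a (2 * m + 2 * k + 1) = a (2 * m - k + 1)"
    and even: "\<And>m k. 0 \<le> m \<Longrightarrow> 0 \<le> k \<Longrightarrow> a (2 * m + 2 * k + 2) = a (2 * m + k + 2)"
    and "n \<ge> 1"
  shows "a n = a 1"
proof -
  \<comment> \<open>\<open>even\<close> reduces \<open>2k + 2\<close> to \<open>k + 2\<close>, \<open>odd\<close> reduces \<open>2m + 3\<close> to \<open>2m\<close>;
      2 and 3 are done by hand\<close>
  have a3: "a 3 = a 1"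
    using even[of 0 1] odd[of 2 1] odd[of 1 2] by simp
  have a2: "a 2 = a 1"
    using odd[of 1 1] even[of 0 2] even[of 1 1] a3 even[of 0 1] by simp
  have "a (int n) = a 1" if "n \<ge> 1" for n :: nat
    using that
  proof (induction n rule: less_induct)
    case (less n)
    show ?case
    proof (cases "n \<le> 3")
      case True
      then have "n = 1 \<or> n = 2 \<or> n = 3" using less.prems by auto
      then show ?thesis using a2 a3 by auto
    next
      case False
      show ?thesis
      proof (cases "even n")
        case True
        define k where "k = n div 2 - 1"
        have "n = 2 * k + 2" "k + 2 < n" using True False by (auto simp: k_def elim!: evenE)
        then have "a (int n) = a (2 * int k + 2)" by (simp add: add.commute)
        also have "\<dots> = a (int (k + 2))" using even[of 0 "int k"] by (simp add: ac_simps)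
        also have "\<dots> = a 1" using less.IH[of "k + 2"] \<open>k + 2 < n\<close> by simp
        finally show ?thesis .
      next
        case odd_n: False
        define m where "m = n div 2 - 1"
        have "n = 2 * m + 3" "2 * m < n" "1 \<le> 2 * m" using odd_n False by (auto simp: m_def elim!: oddE)
        then have "a (int n) = a (int (2 * m))" using odd[of 1 "int m"] by (simp add: algebra_simps)
        also have "\<dots> = a 1" using less.IH[of "2 * m"] \<open>2 * m < n\<close> \<open>1 \<le> 2 * m\<close> by simp
        finally show ?thesis .
      qed
    qed
  qed
  from this[of "nat n"] show ?thesis
    using \<open>n \<ge> 1\<close> by simp
qed

lemma fourier_constant_if_slantHankel_eq_slantHToeplitz:
  assumes eq: "\<forall>f. H2seq f \<longrightarrow> slantHankel phi f = slantHToeplitz psi f" and "n \<ge> 1"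
  shows "fourier phi n = fourier phi 1"
proof -
  have basis_eq: "slantHankel phi (basis_seq j) m = slantHToeplitz psi (basis_seq j) m" if "j \<ge> 0" for j m
    using eq H2seq_basis_seq[OF that] by simp
  have odd0: "fourier phi (2 * m + 2 * k + 1) = fourier psi (2 * m - k)" if "k \<ge> 0" "m \<ge> 0" for k m
    using basis_eq[of "2 * k" m] that slantHankel_basis_seq[of "2 * k" m phi]
      slantHToeplitz_basis_seq_even[of k m psi] by (simp add: algebra_simps)
  have even0: "fourier phi (2 * m + 2 * k + 2) = fourier psi (2 * m + k + 1)" if "k \<ge> 0" "m \<ge> 0" for k m
    using basis_eq[of "2 * k + 1" m] that slantHankel_basis_seq[of "2 * k + 1" m phi]
      slantHToeplitz_basis_seq_odd[of k m psi] by (simp add: algebra_simps)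
  have psi_phi: "fourier psi j = fourier phi (j + 1)" if "j \<ge> 0" for j
  proof (cases "even j")
    case True
    then obtain m where "j = 2 * m" by (auto elim: evenE)
    then show ?thesis using odd0[of 0 m] that by simp
  next
    case False
    then obtain m where "j = 2 * m + 1" by (auto elim: oddE)
    then show ?thesis using even0[of 0 m] that by (simp add: algebra_simps)
  qed
  show ?thesis
  proof (rule slant_relations_imp_constant[OF _ _ \<open>n \<ge> 1\<close>])
    show "fourier phi (2 * m + 2 * k + 1) = fourier phi (2 * m - k + 1)" if "0 \<le> k" "k \<le> 2 * m" for m k
      using odd0[of k m] psi_phi[of "2 * m - k"] that by simp
    show "fourier phi (2 * m + 2 * k + 2) = fourier phi (2 * m + k + 2)" if "0 \<le> m" "0 \<le> k" for m k
      using even0[of k m] psi_phi[of "2 * m + k + 1"] that by (simp add: algebra_simps)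
  qed
qed

section \<open>Square-integrable functions on the circle\<close>

abbreviation circle_measure :: "real measure" where
  "circle_measure \<equiv> lebesgue_on {0..2*pi}"

definition bdd_measurable :: "(real \<Rightarrow> complex) \<Rightarrow> bool" where
  "bdd_measurable f \<longleftrightarrow>
     f \<in> borel_measurable circle_measure \<and> (\<exists>B. AE t in circle_measure. norm (f t) \<le> B)"

lemma finite_measure_circle: "finite_measure circle_measure"
  by (rule finite_measure_lebesgue_on) (metis lmeasurable_cbox interval_cbox)

lemma bdd_measurable_integrable: "bdd_measurable f \<Longrightarrow> integrable circle_measure f"
  using finite_measure.integrable_const_bound[OF finite_measure_circle]
  unfolding bdd_measurable_def by blast

lemma bdd_measurable_continuous:
  assumes "continuous_on {0..2*pi} f"
  shows "bdd_measurable f"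
proof -
  have "compact (f ` {0..2*pi})"
    by (rule compact_continuous_image[OF assms]) auto
  then obtain B where "\<forall>x\<in>f ` {0..2*pi}. norm x \<le> B"
    using compact_imp_bounded bounded_iff by metis
  then have "AE t in circle_measure. norm (f t) \<le> B"
    by (intro AE_I2) auto
  moreover have "f \<in> borel_measurable circle_measure"
    by (rule continuous_imp_measurable_on_sets_lebesgue[OF assms]) auto
  ultimately show ?thesis
    unfolding bdd_measurable_def by blast
qed

lemma bdd_measurable_const: "bdd_measurable (\<lambda>t. c)"
  by (rule bdd_measurable_continuous) auto

lemma bdd_measurable_add:
  assumes "bdd_measurable f" "bdd_measurable g"
  shows "bdd_measurable (\<lambda>t. f t + g t)"
proof -
  obtain B C where "AE t in circle_measure. norm (f t) \<le> B" "AE t in circle_measure. norm (g t) \<le> C"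
    using assms unfolding bdd_measurable_def by blast
  then have "AE t in circle_measure. norm (f t + g t) \<le> B + C"
    by eventually_elim (smt (verit) norm_triangle_ineq)
  then show ?thesis
    using assms unfolding bdd_measurable_def by auto
qed

lemma bdd_measurable_mult:
  assumes "bdd_measurable f" "bdd_measurable g"
  shows "bdd_measurable (\<lambda>t. f t * g t)"
proof -
  obtain B C where "AE t in circle_measure. norm (f t) \<le> B" "AE t in circle_measure. norm (g t) \<le> C"
    using assms unfolding bdd_measurable_def by blast
  then have "AE t in circle_measure. norm (f t * g t) \<le> B * C"
    by eventually_elim (simp add: norm_mult mult_mono')
  then show ?thesis
    using assms unfolding bdd_measurable_def by auto
qed

lemma bdd_measurable_cnj: "bdd_measurable f \<Longrightarrow> bdd_measurable (\<lambda>t. cnj (f t))"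
  unfolding bdd_measurable_def
  by (auto intro: borel_measurable_continuous_on[where f = cnj] continuous_intros)

lemma bdd_measurable_diff:
  "bdd_measurable f \<Longrightarrow> bdd_measurable g \<Longrightarrow> bdd_measurable (\<lambda>t. f t - g t)"
  using bdd_measurable_add[of f "\<lambda>t. -1 * g t"] bdd_measurable_mult[OF bdd_measurable_const[of "-1"], of g]
  by simp

lemma bdd_measurable_sum:
  "finite F \<Longrightarrow> (\<And>i. i \<in> F \<Longrightarrow> bdd_measurable (f i)) \<Longrightarrow> bdd_measurable (\<lambda>t. \<Sum>i\<in>F. f i t)"
  by (induction F rule: finite_induct) (auto intro: bdd_measurable_add bdd_measurable_const)

lemma bdd_measurable_integrable_sqnorm:
  assumes "bdd_measurable f"
  shows "integrable circle_measure (\<lambda>t. (norm (f t))\<^sup>2)"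
proof -
  have "integrable circle_measure (\<lambda>t. f t * cnj (f t))"
    by (intro bdd_measurable_integrable bdd_measurable_mult bdd_measurable_cnj assms)
  then have "integrable circle_measure (\<lambda>t. Re (f t * cnj (f t)))"
    by (rule integrable_Re)
  then show ?thesis
    by (simp add: complex_mult_cnj cmod_def power2_eq_square[symmetric])
qed

definition L2_inner :: "(real \<Rightarrow> complex) \<Rightarrow> (real \<Rightarrow> complex) \<Rightarrow> complex" where
  "L2_inner f g = (LINT t|circle_measure. f t * cnj (g t))"

definition L2_norm :: "(real \<Rightarrow> complex) \<Rightarrow> real" where
  "L2_norm f = sqrt (LINT t|circle_measure. (norm (f t))\<^sup>2)"

lemma L2_inner_add_left:
  "bdd_measurable f \<Longrightarrow> bdd_measurable g \<Longrightarrow> bdd_measurable h \<Longrightarrow>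
   L2_inner (\<lambda>t. f t + g t) h = L2_inner f h + L2_inner g h"
  unfolding L2_inner_def
  by (simp add: distrib_right bdd_measurable_integrable bdd_measurable_mult bdd_measurable_cnj)

lemma L2_inner_diff_left:
  "bdd_measurable f \<Longrightarrow> bdd_measurable g \<Longrightarrow> bdd_measurable h \<Longrightarrow>
   L2_inner (\<lambda>t. f t - g t) h = L2_inner f h - L2_inner g h"
  unfolding L2_inner_def
  by (simp add: left_diff_distrib bdd_measurable_integrable bdd_measurable_mult bdd_measurable_cnj)

lemma L2_inner_sum_left:
  "finite F \<Longrightarrow> (\<And>i. i \<in> F \<Longrightarrow> bdd_measurable (f i)) \<Longrightarrow> bdd_measurable h \<Longrightarrow>
   L2_inner (\<lambda>t. \<Sum>i\<in>F. f i t) h = (\<Sum>i\<in>F. L2_inner (f i) h)"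
  unfolding L2_inner_def
  by (simp add: sum_distrib_right bdd_measurable_integrable bdd_measurable_mult bdd_measurable_cnj)

lemma L2_inner_scale_left: "L2_inner (\<lambda>t. c * f t) h = c * L2_inner f h"
  unfolding L2_inner_def by (simp add: mult.assoc)

lemma L2_inner_commute: "L2_inner g f = cnj (L2_inner f g)"
  unfolding L2_inner_def by (simp flip: Bochner_Integration.integral_cnj add: mult.commute)

lemma L2_norm_power2: "(L2_norm f)\<^sup>2 = (LINT t|circle_measure. (norm (f t))\<^sup>2)"
  unfolding L2_norm_def by (simp add: integral_nonneg_AE)

lemma L2_inner_self: "L2_inner f f = of_real ((L2_norm f)\<^sup>2)"
  unfolding L2_inner_def L2_norm_power2 complex_norm_square[symmetric]
  by (rule integral_complex_of_real)

lemma L2_norm_nonneg: "L2_norm f \<ge> 0"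
  unfolding L2_norm_def by simp

lemma L2_norm_minus_commute: "L2_norm (\<lambda>t. f t - g t) = L2_norm (\<lambda>t. g t - f t)"
  unfolding L2_norm_def by (simp add: norm_minus_commute)

lemma L2_inner_eq_0_if_L2_norm_eq_0:
  assumes "bdd_measurable u" "L2_norm u = 0"
  shows "L2_inner u v = 0"
proof -
  have "(LINT t|circle_measure. (norm (u t))\<^sup>2) = 0"
    using assms(2) L2_norm_power2[of u] by simp
  then have "AE t in circle_measure. (norm (u t))\<^sup>2 = 0"
    using integral_nonneg_eq_0_iff_AE[OF bdd_measurable_integrable_sqnorm[OF assms(1)]] by simp
  then have "AE t in circle_measure. u t * cnj (v t) = 0"
    by eventually_elim simp
  then show ?thesis
    unfolding L2_inner_def by (rule integral_eq_zero_AE)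
qed

lemma L2_Cauchy_Schwarz:
  assumes u: "bdd_measurable u" and v: "bdd_measurable v"
  shows "norm (L2_inner u v) \<le> L2_norm u * L2_norm v"
proof (cases "L2_norm u = 0 \<or> L2_norm v = 0")
  case True
  then have "L2_inner u v = 0"
    using L2_inner_eq_0_if_L2_norm_eq_0[OF u] L2_inner_eq_0_if_L2_norm_eq_0[OF v] L2_inner_commute[of u v]
    by fastforce
  then show ?thesis
    by (simp add: L2_norm_nonneg)
next
  case False
  define d where "d = L2_norm v / L2_norm u"
  have d: "d > 0"
    using False L2_norm_nonneg[of u] L2_norm_nonneg[of v] by (simp add: d_def)
  \<comment> \<open>AM-GM, weighted by the ratio of the norms\<close>
  have amgm: "x * y \<le> (d * x\<^sup>2 + y\<^sup>2 / d) / 2" for x y :: real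
  proof -
    have "0 \<le> (d * x - y)\<^sup>2 / d" using d by simp
    also have "\<dots> = d * x\<^sup>2 + y\<^sup>2 / d - 2 * (x * y)"
      using d by (simp add: power2_eq_square field_simps)
    finally show ?thesis by simp
  qed
  have "norm (L2_inner u v) \<le> (LINT t|circle_measure. norm (u t) * norm (v t))"
    unfolding L2_inner_def
    using integral_norm_bound[of circle_measure "\<lambda>t. u t * cnj (v t)"] by (simp add: norm_mult)
  also have "\<dots> \<le> (LINT t|circle_measure. (d * (norm (u t))\<^sup>2 + (norm (v t))\<^sup>2 / d) / 2)"
  proof (rule integral_mono)
    show "integrable circle_measure (\<lambda>t. norm (u t) * norm (v t))"
      using integrable_norm[OF bdd_measurable_integrable[OF bdd_measurable_mult[OF u bdd_measurable_cnj[OF v]]]]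
      by (simp add: norm_mult)
  qed (use amgm bdd_measurable_integrable_sqnorm[OF u] bdd_measurable_integrable_sqnorm[OF v] in auto)
  also have "\<dots> = (d * (L2_norm u)\<^sup>2 + (L2_norm v)\<^sup>2 / d) / 2"
    using bdd_measurable_integrable_sqnorm[OF u] bdd_measurable_integrable_sqnorm[OF v]
    by (simp add: L2_norm_power2)
  also have "\<dots> = L2_norm u * L2_norm v"
    using False by (simp add: d_def power2_eq_square field_simps)
  finally show ?thesis .
qed

lemma L2_norm_triangle:
  assumes u: "bdd_measurable u" and v: "bdd_measurable v"
  shows "L2_norm (\<lambda>t. u t + v t) \<le> L2_norm u + L2_norm v"
proof -
  let ?w = "\<lambda>t. u t + v t"
  have uv: "bdd_measurable ?w"
    using u v by (rule bdd_measurable_add)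
  have "of_real ((L2_norm ?w)\<^sup>2) = L2_inner u ?w + L2_inner v ?w"
    unfolding L2_inner_self[symmetric] using u v uv by (rule L2_inner_add_left)
  then have "(L2_norm ?w)\<^sup>2 = norm (L2_inner u ?w + L2_inner v ?w)"
    by (metis norm_of_real abs_power2)
  also have "\<dots> \<le> norm (L2_inner u ?w) + norm (L2_inner v ?w)"
    by (rule norm_triangle_ineq)
  also have "\<dots> \<le> (L2_norm u + L2_norm v) * L2_norm ?w"
    using L2_Cauchy_Schwarz[OF u uv] L2_Cauchy_Schwarz[OF v uv] by (simp add: distrib_right)
  finally have "L2_norm ?w * L2_norm ?w \<le> (L2_norm u + L2_norm v) * L2_norm ?w"
    by (simp add: power2_eq_square)
  then show ?thesis
    using L2_norm_nonneg[of ?w] L2_norm_nonneg[of u] L2_norm_nonneg[of v]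
    by (cases "L2_norm ?w = 0") (auto intro: mult_right_le_imp_le)
qed

section \<open>Fourier basis and trigonometric polynomials\<close>

definition fourier_basis :: "int \<Rightarrow> real \<Rightarrow> complex" where
  "fourier_basis n t = cis (of_int n * t)"

definition trig_sum :: "int set \<Rightarrow> (int \<Rightarrow> complex) \<Rightarrow> real \<Rightarrow> complex" where
  "trig_sum F c t = (\<Sum>n\<in>F. c n * fourier_basis n t)"

lemma integral_cis_circle:
  "(LINT t|circle_measure. cis (of_int n * t)) = (if n = 0 then 2 * pi else 0)"
proof -
  have "(LINT t|circle_measure. cis (of_int n * t)) = integral {0..2*pi} (\<lambda>t. cis (of_int n * t))"
    by (rule lebesgue_integral_eq_integral)
      (auto intro!: continuous_imp_integrable_real continuous_intros)
  also have "\<dots> = integral {0..2*pi} (\<lambda>t. exp ((\<i> * of_int n) * complex_of_real t))"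
    by (simp add: cis_conv_exp mult_ac)
  also have "\<dots> = (if n = 0 then 2 * pi else 0)"
  proof (cases "n = 0")
    case False
    have "exp ((\<i> * of_int n) * complex_of_real (2 * pi)) = exp ((2 * of_int n * pi) * \<i>)"
      by (simp add: mult_ac)
    also have "\<dots> = 1"
      by (rule exp_integer_2pi) simp
    finally show ?thesis
      using False by (subst integral_exp) auto
  qed (simp add: scaleR_conv_of_real)
  finally show ?thesis .
qed

lemma L2_inner_fourier_basis:
  "L2_inner (fourier_basis n) (fourier_basis m) = (if n = m then of_real (2 * pi) else 0)"
proof -
  have "L2_inner (fourier_basis n) (fourier_basis m) = (LINT t|circle_measure. cis (of_int (n - m) * t))"
    unfolding L2_inner_def fourier_basis_def by (simp add: cis_cnj cis_mult algebra_simps)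
  also have "\<dots> = (if n - m = 0 then 2 * pi else 0)"
    by (rule integral_cis_circle)
  finally show ?thesis
    by simp
qed

lemma bdd_measurable_fourier_basis: "bdd_measurable (fourier_basis n)"
  unfolding fourier_basis_def by (rule bdd_measurable_continuous) (intro continuous_intros)

lemma bdd_measurable_trig_sum: "finite F \<Longrightarrow> bdd_measurable (trig_sum F c)"
  unfolding trig_sum_def
  by (intro bdd_measurable_sum bdd_measurable_mult bdd_measurable_const bdd_measurable_fourier_basis)

lemma L2_inner_trig_sum_right:
  assumes "bdd_measurable h" "finite F"
  shows "L2_inner h (trig_sum F c) = (\<Sum>n\<in>F. cnj (c n) * L2_inner h (fourier_basis n))"
proof -
  have "L2_inner (trig_sum F c) h = (\<Sum>n\<in>F. c n * L2_inner (fourier_basis n) h)"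
    unfolding trig_sum_def using assms
    by (subst L2_inner_sum_left)
      (auto intro: bdd_measurable_mult bdd_measurable_const bdd_measurable_fourier_basis
        simp: L2_inner_scale_left)
  then show ?thesis
    by (subst L2_inner_commute) (simp add: L2_inner_commute[of h])
qed

lemma L2_inner_trig_sum_fourier_basis:
  fixes c :: "int \<Rightarrow> complex"
  assumes "finite F"
  shows "L2_inner (trig_sum F c) (fourier_basis m) = (if m \<in> F then of_real (2 * pi) * c m else 0)"
proof -
  have "L2_inner (fourier_basis m) (trig_sum F c) = (\<Sum>n\<in>F. if m = n then cnj (c n) * of_real (2 * pi) else 0)"
    using assms
    by (simp add: L2_inner_trig_sum_right bdd_measurable_fourier_basis L2_inner_fourier_basis
        if_distrib[of "(*) _"] cong: if_cong)
  then show ?thesis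
    using assms by (subst L2_inner_commute) (simp add: sum.delta')
qed

lemma constant_fourier_coeffs_eq_0:
  assumes f: "bdd_measurable f" and c: "\<And>n. n \<ge> 1 \<Longrightarrow> L2_inner f (fourier_basis n) = c"
  shows "c = 0"
proof (rule ccontr)
  assume "c \<noteq> 0"
  obtain N :: nat where N: "2 * pi * (L2_norm f)\<^sup>2 / (norm c)\<^sup>2 < real N"
    using reals_Archimedean2 by blast
  define q where "q = trig_sum {1..int N} (\<lambda>_. 1)"
  have q: "bdd_measurable q"
    unfolding q_def by (simp add: bdd_measurable_trig_sum)
  have "L2_inner f q = of_nat N * c"
    unfolding q_def using f c by (simp add: L2_inner_trig_sum_right)
  then have inner_bound: "real N * norm c \<le> L2_norm f * L2_norm q"
    using L2_Cauchy_Schwarz[OF f q] by (simp add: norm_mult)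
  have norm_q: "(L2_norm q)\<^sup>2 = 2 * pi * real N"
  proof -
    have "L2_inner q q = (\<Sum>n\<in>{1..int N}. L2_inner q (fourier_basis n))"
      unfolding q_def by (simp add: L2_inner_trig_sum_right bdd_measurable_trig_sum)
    also have "\<dots> = (\<Sum>n\<in>{1..int N}. complex_of_real (2 * pi))"
      by (intro sum.cong) (simp_all add: q_def L2_inner_trig_sum_fourier_basis)
    finally have "of_real ((L2_norm q)\<^sup>2) = (of_real (2 * pi * real N) :: complex)"
      by (simp add: L2_inner_self)
    then show ?thesis
      by (simp only: of_real_eq_iff)
  qed
  have "(real N * norm c)\<^sup>2 \<le> (L2_norm f * L2_norm q)\<^sup>2"
    using inner_bound by (intro power_mono) auto
  then have "(real N * norm c)\<^sup>2 \<le> (L2_norm f)\<^sup>2 * (2 * pi * real N)"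
    by (simp add: power_mult_distrib norm_q)
  moreover have "real N > 0"
    using N by (smt (verit) divide_nonneg_nonneg zero_le_power2 pi_gt_zero mult_nonneg_nonneg)
  ultimately have "real N * (norm c)\<^sup>2 \<le> 2 * pi * (L2_norm f)\<^sup>2"
    by (simp add: power2_eq_square algebra_simps)
  then show False
    using N \<open>c \<noteq> 0\<close> by (simp add: field_simps)
qed

definition trig_poly :: "(real \<Rightarrow> complex) \<Rightarrow> bool" where
  "trig_poly p \<longleftrightarrow> (\<exists>F c. finite F \<and> p = trig_sum F c)"

lemma trig_poly_trig_sum: "finite F \<Longrightarrow> trig_poly (trig_sum F c)"
  unfolding trig_poly_def by blast

lemma bdd_measurable_trig_poly: "trig_poly p \<Longrightarrow> bdd_measurable p"
  unfolding trig_poly_def using bdd_measurable_trig_sum by blast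

lemma trig_poly_monomial: "trig_poly (\<lambda>t. c * fourier_basis n t)"
proof -
  have "trig_sum {n} (\<lambda>_. c) = (\<lambda>t. c * fourier_basis n t)"
    by (simp add: fun_eq_iff trig_sum_def)
  then show ?thesis
    using trig_poly_trig_sum[of "{n}" "\<lambda>_. c"] by simp
qed

lemma trig_poly_const: "trig_poly (\<lambda>t. c)"
  using trig_poly_monomial[of c 0] by (simp add: fourier_basis_def)

lemma trig_poly_add:
  assumes "trig_poly p" "trig_poly q"
  shows "trig_poly (\<lambda>t. p t + q t)"
proof -
  obtain F c G d where F: "finite F" "p = trig_sum F c" and G: "finite G" "q = trig_sum G d"
    using assms unfolding trig_poly_def by blast
  define c' where "c' n = (if n \<in> F then c n else 0)" for n
  define d' where "d' n = (if n \<in> G then d n else 0)" for n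
  have "trig_sum F c = trig_sum (F \<union> G) c'" "trig_sum G d = trig_sum (F \<union> G) d'"
    unfolding trig_sum_def c'_def d'_def fun_eq_iff
    using F G by (auto intro!: sum.mono_neutral_cong_left)
  then have "(\<lambda>t. p t + q t) = trig_sum (F \<union> G) (\<lambda>n. c' n + d' n)"
    unfolding F G trig_sum_def fun_eq_iff by (simp add: sum.distrib distrib_right)
  then show ?thesis
    using F G by (simp add: trig_poly_trig_sum)
qed

lemma trig_poly_sum:
  "finite I \<Longrightarrow> (\<And>i. i \<in> I \<Longrightarrow> trig_poly (p i)) \<Longrightarrow> trig_poly (\<lambda>t. \<Sum>i\<in>I. p i t)"
  by (induction I rule: finite_induct) (auto intro: trig_poly_add trig_poly_const)

lemma trig_poly_mult:
  assumes "trig_poly p" "trig_poly q"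
  shows "trig_poly (\<lambda>t. p t * q t)"
proof -
  obtain F c G d where F: "finite F" "p = trig_sum F c" and G: "finite G" "q = trig_sum G d"
    using assms unfolding trig_poly_def by blast
  have "p t * q t = (\<Sum>n\<in>F. \<Sum>m\<in>G. (c n * d m) * fourier_basis (n + m) t)" for t
    unfolding F G trig_sum_def sum_product
    by (intro sum.cong refl) (simp add: fourier_basis_def cis_mult ring_distribs mult_ac)
  moreover have "trig_poly (\<lambda>t. \<Sum>n\<in>F. \<Sum>m\<in>G. (c n * d m) * fourier_basis (n + m) t)"
    using F G by (intro trig_poly_sum trig_poly_monomial)
  ultimately show ?thesis
    by simp
qed

lemma trig_poly_real_polynomial_function:
  "real_polynomial_function g \<Longrightarrow> trig_poly (\<lambda>t. of_real (g (cis t)))"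
proof (induction g rule: real_polynomial_function.induct)
  case (linear g)
  interpret linear g
    using linear by (rule bounded_linear.linear)
  have "cis t = cos t *\<^sub>R 1 + sin t *\<^sub>R \<i>" for t
    by (simp add: complex_eq_iff)
  then have g_cis: "g (cis t) = cos t * g 1 + sin t * g \<i>" for t
    by (simp add: add scale)
  define a b where "a = (g 1 - \<i> * g \<i>) / 2" and "b = (g 1 + \<i> * g \<i>) / 2"
  have "(\<lambda>t. complex_of_real (g (cis t))) = (\<lambda>t. a * fourier_basis 1 t + b * fourier_basis (-1) t)"
    using g_cis
    by (simp add: fun_eq_iff a_def b_def fourier_basis_def complex_eq_iff field_simps)
  then show ?case
    by (simp add: trig_poly_add trig_poly_monomial)
qed (auto intro: trig_poly_const trig_poly_add trig_poly_mult)

section \<open>Density of trigonometric polynomials\<close>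

lemma trig_poly_uniform_approx:
  assumes G: "continuous_on (sphere 0 1) G" and "e > 0"
  obtains p where "trig_poly p" "\<And>t. norm (G (cis t) - p t) < e"
proof -
  have Re_G: "continuous_on (sphere 0 1) (\<lambda>z. Re (G z))" and Im_G: "continuous_on (sphere 0 1) (\<lambda>z. Im (G z))"
    using G by (auto intro: continuous_intros)
  obtain g where g: "real_polynomial_function g" "\<And>z. z \<in> sphere 0 1 \<Longrightarrow> \<bar>Re (G z) - g z\<bar> < e / 2"
    by (rule Stone_Weierstrass_real_polynomial_function[OF compact_sphere Re_G half_gt_zero[OF \<open>e > 0\<close>]]) blast
  obtain h where h: "real_polynomial_function h" "\<And>z. z \<in> sphere 0 1 \<Longrightarrow> \<bar>Im (G z) - h z\<bar> < e / 2"
    by (rule Stone_Weierstrass_real_polynomial_function[OF compact_sphere Im_G half_gt_zero[OF \<open>e > 0\<close>]]) blast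
  define p where "p t = of_real (g (cis t)) + \<i> * of_real (h (cis t))" for t
  have "trig_poly p"
    unfolding p_def
    by (intro trig_poly_add trig_poly_mult trig_poly_const trig_poly_real_polynomial_function g h)
  moreover have "norm (G (cis t) - p t) < e" for t
  proof -
    have "G (cis t) - p t = of_real (Re (G (cis t)) - g (cis t)) + \<i> * of_real (Im (G (cis t)) - h (cis t))"
      by (simp add: p_def complex_eq_iff)
    also have "norm \<dots> \<le> \<bar>Re (G (cis t)) - g (cis t)\<bar> + \<bar>Im (G (cis t)) - h (cis t)\<bar>"
      by (rule order_trans[OF norm_triangle_ineq]) (simp add: norm_mult del: of_real_diff)
    also have "\<dots> < e"
      using g(2)[of "cis t"] h(2)[of "cis t"] by simp
    finally show ?thesis .
  qed
  ultimately show ?thesis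
    using that by blast
qed

lemma Arg2pi_cis: "t \<in> {0..<2*pi} \<Longrightarrow> Arg2pi (cis t) = t"
  using Arg2pi_exp[of "\<i> * of_real t"] by (simp add: cis_conv_exp)

lemma cis_image_circle: "cis ` {0..2*pi} = sphere 0 1"
proof
  show "sphere 0 1 \<subseteq> cis ` {0..2*pi}"
  proof
    fix z :: complex assume "z \<in> sphere 0 1"
    then have "z = cis (Arg2pi z)"
      using Arg2pi[of z] by (simp add: is_Arg_def cis_conv_exp)
    moreover have "Arg2pi z \<in> {0..2*pi}"
      using Arg2pi[of z] by simp
    ultimately show "z \<in> cis ` {0..2*pi}"
      by blast
  qed
qed auto

lemma continuous_on_Arg2pi_if_periodic:
  fixes v :: "real \<Rightarrow> 'a::topological_space"
  assumes v: "continuous_on {0..2*pi} v" and periodic: "v 0 = v (2*pi)"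
  shows "continuous_on (sphere 0 1) (\<lambda>z. v (Arg2pi z))"
    and "\<And>t. t \<in> {0..2*pi} \<Longrightarrow> v (Arg2pi (cis t)) = v t"
proof -
  show v_cis: "v (Arg2pi (cis t)) = v t" if "t \<in> {0..2*pi}" for t
    using that periodic Arg2pi_eq_0[of 1] by (cases "t = 2*pi") (simp_all add: Arg2pi_cis)
  \<comment> \<open>\<open>cis\<close> restricted to the compact interval is a quotient map onto the circle\<close>
  have quotient: "openin (top_of_set {0..2*pi}) ({0..2*pi} \<inter> cis -` U)
      \<longleftrightarrow> openin (top_of_set (sphere 0 1)) U" if "U \<subseteq> sphere 0 1" for U
  proof (rule Abstract_Topology_2.continuous_imp_quotient_map)
    show "continuous_on {0..2*pi} cis"
      by (intro continuous_intros)
  qed (use that cis_image_circle in auto)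
  have "openin (top_of_set (sphere 0 1)) (sphere 0 1 \<inter> (\<lambda>z. v (Arg2pi z)) -` U)"
    if "open U" for U
  proof -
    have "openin (top_of_set {0..2*pi}) ({0..2*pi} \<inter> v -` U)"
      using continuous_openin_preimage_gen[OF v(1) \<open>open U\<close>] .
    moreover have "{0..2*pi} \<inter> cis -` (sphere 0 1 \<inter> (\<lambda>z. v (Arg2pi z)) -` U) = {0..2*pi} \<inter> v -` U"
      using v_cis by auto
    ultimately show ?thesis
      using quotient[of "sphere 0 1 \<inter> (\<lambda>z. v (Arg2pi z)) -` U"] by auto
  qed
  then show "continuous_on (sphere 0 1) (\<lambda>z. v (Arg2pi z))"
    by (subst continuous_on_open_gen[where T = UNIV]) auto
qed

lemma L2_norm_le_uniform_bound:
  assumes u: "bdd_measurable u" and bound: "\<And>t. t \<in> {0..2*pi} \<Longrightarrow> norm (u t) \<le> e"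
  shows "L2_norm u \<le> sqrt (2 * pi) * e"
proof -
  have "norm (u 0) \<le> e"
    using bound[of 0] by simp
  then have e: "e \<ge> 0"
    by (rule order_trans[OF norm_ge_zero])
  have "(LINT t|circle_measure. (norm (u t))\<^sup>2) \<le> (LINT t|circle_measure. e\<^sup>2)"
  proof (rule integral_mono)
    show "integrable circle_measure (\<lambda>t. (norm (u t))\<^sup>2)"
      using u by (rule bdd_measurable_integrable_sqnorm)
    show "integrable circle_measure (\<lambda>t. e\<^sup>2)"
      using finite_measure.integrable_const[OF finite_measure_circle] .
    show "(norm (u t))\<^sup>2 \<le> e\<^sup>2" if "t \<in> space circle_measure" for t
      using bound[of t] that by (intro power_mono) auto
  qed
  also have "\<dots> = 2 * pi * e\<^sup>2"
    using integral_cis_circle[of 0] by (simp add: scaleR_conv_of_real complex_eq_iff)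
  finally have "(L2_norm u)\<^sup>2 \<le> (sqrt (2 * pi) * e)\<^sup>2"
    by (simp add: L2_norm_power2 power_mult_distrib)
  then show ?thesis
    by (rule power2_le_imp_le) (use e in simp)
qed

lemma trig_poly_approx_continuous_periodic:
  assumes v: "continuous_on {0..2*pi} v" "v 0 = v (2*pi)" and "e > 0"
  obtains p where "trig_poly p" "L2_norm (\<lambda>t. v t - p t) < e"
proof -
  define \<eta> where "\<eta> = e / (2 * sqrt (2 * pi))"
  have "\<eta> > 0"
    using \<open>e > 0\<close> by (simp add: \<eta>_def)
  then obtain p where p: "trig_poly p" "\<And>t. norm (v (Arg2pi (cis t)) - p t) < \<eta>"
    using trig_poly_uniform_approx[OF continuous_on_Arg2pi_if_periodic(1)[OF v]] by blast
  have "norm (v t - p t) \<le> \<eta>" if "t \<in> {0..2*pi}" for t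
    using p(2)[of t] continuous_on_Arg2pi_if_periodic(2)[OF v that] by simp
  then have "L2_norm (\<lambda>t. v t - p t) \<le> sqrt (2 * pi) * \<eta>"
    using bdd_measurable_diff[OF bdd_measurable_continuous[OF v(1)] bdd_measurable_trig_poly[OF p(1)]]
    by (rule L2_norm_le_uniform_bound[rotated])
  also have "\<dots> < e"
    using \<open>e > 0\<close> by (simp add: \<eta>_def)
  finally show ?thesis
    using that p(1) by blast
qed

lemma L2_norm_tendsto_0_dominated:
  assumes f: "bdd_measurable f" and h: "\<And>n. bdd_measurable (h n)"
    and lim: "AE t in circle_measure. (\<lambda>n. h n t) \<longlonglongrightarrow> f t"
    and bound: "\<And>n. AE t in circle_measure. norm (h n t) \<le> B"
  shows "(\<lambda>n. L2_norm (\<lambda>t. f t - h n t)) \<longlonglongrightarrow> 0"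
proof -
  obtain C where C: "AE t in circle_measure. norm (f t) \<le> C"
    using f unfolding bdd_measurable_def by blast
  have "(\<lambda>n. LINT t|circle_measure. (norm (f t - h n t))\<^sup>2) \<longlonglongrightarrow> (LINT t|circle_measure. 0)"
  proof (rule integral_dominated_convergence[where w = "\<lambda>_. (C + B)\<^sup>2"])
    show "(\<lambda>t. (norm (f t - h n t))\<^sup>2) \<in> borel_measurable circle_measure" for n
      using bdd_measurable_integrable_sqnorm[OF bdd_measurable_diff[OF f h]] by auto
    show "integrable circle_measure (\<lambda>_. (C + B)\<^sup>2)"
      by (rule finite_measure.integrable_const[OF finite_measure_circle])
    show "AE t in circle_measure. (\<lambda>n. (norm (f t - h n t))\<^sup>2) \<longlonglongrightarrow> 0"
      using lim
    proof eventually_elim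
      case (elim t)
      then have "(\<lambda>n. f t - h n t) \<longlonglongrightarrow> 0"
        using tendsto_diff[OF tendsto_const[of "f t"] elim] by simp
      then show ?case
        using tendsto_power[OF tendsto_norm_zero, of _ _ 2] by simp
    qed
    show "AE t in circle_measure. norm ((norm (f t - h n t))\<^sup>2) \<le> (C + B)\<^sup>2" for n
      using C bound[of n]
    proof eventually_elim
      case (elim t)
      then have "norm (f t - h n t) \<le> C + B"
        using norm_triangle_ineq4[of "f t" "h n t"] by linarith
      then show ?case
        by (simp add: power_mono)
    qed
  qed simp
  then have "(\<lambda>n. sqrt (LINT t|circle_measure. (norm (f t - h n t))\<^sup>2)) \<longlonglongrightarrow> sqrt 0"
    by (intro tendsto_real_sqrt) simp
  then show ?thesis
    by (simp add: L2_norm_def)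
qed

definition square_clamp :: "real \<Rightarrow> complex \<Rightarrow> complex" where
  "square_clamp B = clamp (Complex (- B) (- B)) (Complex B B)"

lemma continuous_on_square_clamp: "continuous_on UNIV (square_clamp B)"
  using clamp_continuous_on[of _ _ "\<lambda>x. x" UNIV] by (simp add: square_clamp_def continuous_on_id)

lemma norm_square_clamp_le:
  assumes "B \<ge> 0"
  shows "norm (square_clamp B z) \<le> 2 * B"
proof -
  have "square_clamp B z \<in> cbox (Complex (- B) (- B)) (Complex B B)"
    unfolding square_clamp_def using assms
    by (intro clamp_in_interval) (auto simp: Basis_complex_def inner_complex_def)
  then show ?thesis
    using cmod_le[of "square_clamp B z"] by (auto simp: in_cbox_complex_iff)
qed

lemma square_clamp_eq_self: "norm z \<le> B \<Longrightarrow> square_clamp B z = z"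
  unfolding square_clamp_def using abs_Re_le_cmod[of z] abs_Im_le_cmod[of z]
  by (intro clamp_cancel_cbox) (auto simp: in_cbox_complex_iff)

definition edge_cutoff :: "nat \<Rightarrow> real \<Rightarrow> real" where
  "edge_cutoff n t = min 1 (real n * min t (2*pi - t))"

lemma edge_cutoff_bounded: "t \<in> {0..2*pi} \<Longrightarrow> \<bar>edge_cutoff n t\<bar> \<le> 1"
  by (simp add: edge_cutoff_def)

lemma edge_cutoff_tendsto_1:
  assumes t: "0 < t" "t < 2*pi"
  shows "(\<lambda>n. edge_cutoff n t) \<longlonglongrightarrow> 1"
proof -
  obtain n0 :: nat where n0: "1 / min t (2*pi - t) < real n0"
    using reals_Archimedean2 by blast
  have "edge_cutoff n t = 1" if "n \<ge> n0" for n
  proof -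
    have "1 \<le> real n0 * min t (2*pi - t)"
      using n0 t by (simp add: field_simps)
    also have "\<dots> \<le> real n * min t (2*pi - t)"
      using that t by (intro mult_right_mono) auto
    finally show ?thesis
      by (simp add: edge_cutoff_def)
  qed
  then show ?thesis
    by (intro tendsto_eventually) (auto simp: eventually_sequentially)
qed

lemma bdd_measurable_AE_limit_continuous_periodic:
  assumes "bdd_measurable f"
  obtains h B where "\<And>n. continuous_on {0..2*pi} (h n)" "\<And>n. h n 0 = 0" "\<And>n. h n (2*pi) = 0"
    and "\<And>n t. t \<in> {0..2*pi} \<Longrightarrow> norm (h n t) \<le> B"
    and "AE t in circle_measure. (\<lambda>n. h n t) \<longlonglongrightarrow> f t"
proof -
  obtain B0 where "AE t in circle_measure. norm (f t) \<le> B0"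
    using assms unfolding bdd_measurable_def by blast
  then have f_bound: "AE t in circle_measure. norm (f t) \<le> max B0 0"
    by eventually_elim auto
  define B where "B = max B0 0"
  have "f measurable_on {0..2*pi}"
    using assms unfolding bdd_measurable_def by (simp add: measurable_on_iff_borel_measurable)
  then obtain N g where N: "negligible N" and g: "\<And>n. continuous_on UNIV (g n)"
    and g_lim: "\<And>t. t \<notin> N \<Longrightarrow> (\<lambda>n. g n t) \<longlonglongrightarrow> (if t \<in> {0..2*pi} then f t else 0)"
    unfolding measurable_on_def by blast
  define h where "h n t = of_real (edge_cutoff n t) * square_clamp B (g n t)" for n t
  have "continuous_on {0..2*pi} (h n)" for n
    unfolding h_def edge_cutoff_def
    by (intro continuous_intros continuous_on_compose2[OF continuous_on_square_clamp]
        continuous_on_subset[OF g]) auto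
  moreover have "h n 0 = 0" "h n (2*pi) = 0" for n
    by (simp_all add: h_def edge_cutoff_def)
  moreover have "norm (h n t) \<le> 2 * B" if "t \<in> {0..2*pi}" for n t
    unfolding h_def norm_mult
    using edge_cutoff_bounded[OF that] norm_square_clamp_le[of B] mult_mono[of _ 1 _ "2 * B"]
    by (fastforce simp: B_def)
  moreover have "AE t in circle_measure. (\<lambda>n. h n t) \<longlonglongrightarrow> f t"
  proof -
    have "AE t in lebesgue. t \<notin> N"
      using N by (intro AE_not_in) (simp add: negligible_iff_null_sets)
    then have "AE t in circle_measure. t \<notin> N"
      by (subst AE_restrict_space_iff) (auto elim: eventually_mono)
    moreover have "AE t in circle_measure. t \<notin> {0, 2*pi}"
      by (intro AE_not_in) simp
    ultimately show ?thesis
      using f_bound AE_space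
    proof eventually_elim
      case (elim t)
      then have "(\<lambda>n. square_clamp B (g n t)) \<longlonglongrightarrow> square_clamp B (f t)"
        using g_lim[of t]
        by (auto intro: continuous_on_tendsto_compose[OF continuous_on_square_clamp])
      moreover have "square_clamp B (f t) = f t"
        using elim by (simp add: square_clamp_eq_self B_def)
      moreover have "(\<lambda>n. edge_cutoff n t) \<longlonglongrightarrow> 1"
        using elim by (intro edge_cutoff_tendsto_1) auto
      then have "(\<lambda>n. complex_of_real (edge_cutoff n t)) \<longlonglongrightarrow> 1"
        using tendsto_of_real by fastforce
      ultimately show ?case
        using tendsto_mult[of "\<lambda>n. complex_of_real (edge_cutoff n t)"] by (fastforce simp: h_def)
    qed
  qed
  ultimately show ?thesis
    using that by blast
qed

lemma trig_poly_dense: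
  assumes f: "bdd_measurable f" and "e > 0"
  obtains p where "trig_poly p" "L2_norm (\<lambda>t. f t - p t) < e"
proof -
  obtain h B where h_cont: "\<And>n. continuous_on {0..2*pi} (h n)"
    and h_periodic: "\<And>n. h n 0 = 0" "\<And>n. h n (2*pi) = 0"
    and h_bound: "\<And>n t. t \<in> {0..2*pi} \<Longrightarrow> norm (h n t) \<le> B"
    and h_lim: "AE t in circle_measure. (\<lambda>n. h n t) \<longlonglongrightarrow> f t"
    using bdd_measurable_AE_limit_continuous_periodic[OF f] by blast
  have h: "bdd_measurable (h n)" for n
    using h_cont by (rule bdd_measurable_continuous)
  have "AE t in circle_measure. norm (h n t) \<le> B" for n
    by (rule AE_I2) (simp add: h_bound)
  with f h h_lim have "(\<lambda>n. L2_norm (\<lambda>t. f t - h n t)) \<longlonglongrightarrow> 0"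
    by (rule L2_norm_tendsto_0_dominated)
  then have "\<forall>\<^sub>F n in sequentially. L2_norm (\<lambda>t. f t - h n t) < e / 2"
    using \<open>e > 0\<close> by (intro order_tendstoD(2)) auto
  then obtain n where n: "L2_norm (\<lambda>t. f t - h n t) < e / 2"
    by (meson eventually_sequentially order_refl)
  have "h n 0 = h n (2*pi)"
    by (simp add: h_periodic)
  then obtain p where p: "trig_poly p" "L2_norm (\<lambda>t. h n t - p t) < e / 2"
    using trig_poly_approx_continuous_periodic[OF h_cont[of n] _ half_gt_zero[OF \<open>e > 0\<close>]] by blast
  have "L2_norm (\<lambda>t. (f t - h n t) + (h n t - p t))
      \<le> L2_norm (\<lambda>t. f t - h n t) + L2_norm (\<lambda>t. h n t - p t)"
    by (intro L2_norm_triangle bdd_measurable_diff f h bdd_measurable_trig_poly p(1))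
  then have "L2_norm (\<lambda>t. f t - p t) < e"
    using n p(2) by simp
  then show ?thesis
    using that p(1) by blast
qed

section \<open>Orthogonality of functions with complementary spectra\<close>

lemma L2_inner_eq_0_if_complementary_spectra:
  assumes f: "bdd_measurable f" and g: "bdd_measurable g"
    and f_spec: "\<And>n. n \<in> S \<Longrightarrow> L2_inner f (fourier_basis n) = 0"
    and g_spec: "\<And>n. n \<notin> S \<Longrightarrow> L2_inner g (fourier_basis n) = 0"
  shows "L2_inner f g = 0"
proof -
  have bound: "norm (L2_inner f g) \<le> 2 * e * L2_norm g" if "e > 0" for e
  proof -
    obtain p where "trig_poly p" and approx: "L2_norm (\<lambda>t. f t - p t) < e"
      using trig_poly_dense[OF f \<open>e > 0\<close>] .
    then obtain F c where F: "finite F" and p_def: "p = trig_sum F c"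
      unfolding trig_poly_def by blast
    define p1 where "p1 = trig_sum (F \<inter> S) c"
    define p2 where "p2 = trig_sum (F - S) c"
    have p_split: "p t = p1 t + p2 t" for t
      unfolding p_def p1_def p2_def trig_sum_def by (rule sum.Int_Diff[OF F])
    have p: "bdd_measurable p" and p1: "bdd_measurable p1" and p2: "bdd_measurable p2"
      using F by (simp_all add: p_def p1_def p2_def bdd_measurable_trig_sum)
    have f_p1: "L2_inner f p1 = 0"
      unfolding p1_def using f F f_spec by (simp add: L2_inner_trig_sum_right)
    have p2_g: "L2_inner p2 g = 0"
      unfolding p2_def using g F g_spec by (subst L2_inner_commute) (simp add: L2_inner_trig_sum_right)
    have p2_p1: "L2_inner p2 p1 = 0"
      unfolding p1_def using p2 F
      by (simp add: L2_inner_trig_sum_right p2_def L2_inner_trig_sum_fourier_basis)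
    have "of_real ((L2_norm p1)\<^sup>2) = L2_inner (\<lambda>t. p t - f t) p1"
    proof -
      have "L2_inner p1 p1 = L2_inner (\<lambda>t. p t - p2 t) p1"
        by (simp add: p_split)
      also have "\<dots> = L2_inner p p1"
        using p p2 p1 p2_p1 by (simp add: L2_inner_diff_left)
      also have "\<dots> = L2_inner (\<lambda>t. p t - f t) p1"
        using p f p1 f_p1 by (simp add: L2_inner_diff_left)
      finally show ?thesis
        by (simp add: L2_inner_self)
    qed
    then have "L2_norm p1 * L2_norm p1 \<le> L2_norm (\<lambda>t. p t - f t) * L2_norm p1"
      using L2_Cauchy_Schwarz[OF bdd_measurable_diff[OF p f] p1]
      by (metis norm_of_real abs_power2 power2_eq_square)
    then have p1_small: "L2_norm p1 \<le> L2_norm (\<lambda>t. f t - p t)"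
      using L2_norm_nonneg[of p1] L2_norm_nonneg[of "\<lambda>t. p t - f t"] L2_norm_minus_commute[of p f]
      by (cases "L2_norm p1 = 0") (auto intro: mult_right_le_imp_le)
    have "L2_inner f g = L2_inner (\<lambda>t. (f t - p t) + p1 t + p2 t) g"
      by (simp add: p_split)
    also have "\<dots> = L2_inner (\<lambda>t. f t - p t) g + L2_inner p1 g"
      using f p p1 p2 g p2_g by (simp add: L2_inner_add_left bdd_measurable_add bdd_measurable_diff)
    finally have "norm (L2_inner f g) \<le> L2_norm (\<lambda>t. f t - p t) * L2_norm g + L2_norm p1 * L2_norm g"
      using L2_Cauchy_Schwarz[OF bdd_measurable_diff[OF f p] g] L2_Cauchy_Schwarz[OF p1 g]
      by (metis norm_triangle_le add_mono)
    also have "\<dots> \<le> (e + e) * L2_norm g"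
      unfolding distrib_right[symmetric] using approx p1_small L2_norm_nonneg[of g]
      by (intro mult_right_mono) auto
    finally show ?thesis
      by simp
  qed
  have "norm (L2_inner f g) \<le> 0 + e" if "e > 0" for e
  proof -
    have "norm (L2_inner f g) \<le> 2 * (e / (2 * (L2_norm g + 1))) * L2_norm g"
      using that L2_norm_nonneg[of g] by (intro bound) (simp add: add_nonneg_pos)
    also have "\<dots> \<le> e"
      using that L2_norm_nonneg[of g] by (simp add: field_simps)
    finally show ?thesis
      by simp
  qed
  then show ?thesis
    using field_le_epsilon[of "norm (L2_inner f g)" 0] by simp
qed

lemma Linf_iff_bdd_measurable: "Linf phi \<longleftrightarrow> bdd_measurable (\<lambda>t. phi (cis t))"
  by (simp add: Linf_def bdd_measurable_def)

lemma fourier_eq_L2_inner: "fourier phi n = L2_inner (\<lambda>t. phi (cis t)) (fourier_basis n) / (2 * pi)"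
  unfolding fourier_def L2_inner_def fourier_basis_def by (simp add: cis_cnj)

lemma l2inner_eq_L2_inner: "l2inner f g = L2_inner (\<lambda>t. f (cis t)) (\<lambda>t. g (cis t)) / (2 * pi)"
  unfolding l2inner_def L2_inner_def ..

lemma L2_inner_fourier_basis_mult_left:
  "L2_inner (\<lambda>t. fourier_basis k t * u t) (fourier_basis n) = L2_inner u (fourier_basis (n - k))"
  unfolding L2_inner_def fourier_basis_def
  by (intro Bochner_Integration.integral_cong refl) (simp add: cis_cnj cis_mult algebra_simps)

lemma bdd_measurable_z_plus_z3_Hinf:
  assumes "h \<in> Hinf"
  shows "bdd_measurable (\<lambda>t. cis t + cis t ^ 3 * h (cis t))"
proof (rule bdd_measurable_add[OF _ bdd_measurable_mult])
  show "bdd_measurable cis" "bdd_measurable (\<lambda>t. cis t ^ 3)"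
    by (rule bdd_measurable_continuous, intro continuous_intros)+
  show "bdd_measurable (\<lambda>t. h (cis t))"
    using assms by (simp add: Hinf_def Linf_iff_bdd_measurable)
qed

lemma L2_inner_z_plus_z3_Hinf_eq_0:
  assumes h: "h \<in> Hinf" and "n \<le> 0"
  shows "L2_inner (\<lambda>t. cis t + cis t ^ 3 * h (cis t)) (fourier_basis n) = 0"
proof -
  have h_meas: "bdd_measurable (\<lambda>t. h (cis t))" and h_spec: "\<And>m. m < 0 \<Longrightarrow> fourier h m = 0"
    using h by (auto simp: Hinf_def Linf_iff_bdd_measurable)
  have "cis t ^ 3 = cis (3 * t)" for t
    using Complex.DeMoivre[of t 3] by simp
  then have "(\<lambda>t. cis t + cis t ^ 3 * h (cis t)) = (\<lambda>t. fourier_basis 1 t + fourier_basis 3 t * h (cis t))"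
    by (simp add: fun_eq_iff fourier_basis_def)
  then have "L2_inner (\<lambda>t. cis t + cis t ^ 3 * h (cis t)) (fourier_basis n)
      = L2_inner (fourier_basis 1) (fourier_basis n) + L2_inner (\<lambda>t. h (cis t)) (fourier_basis (n - 3))"
    using h_meas
    by (simp add: L2_inner_add_left bdd_measurable_fourier_basis bdd_measurable_mult
        flip: L2_inner_fourier_basis_mult_left)
  also have "\<dots> = 0"
    using \<open>n \<le> 0\<close> h_spec[of "n - 3"] by (simp add: L2_inner_fourier_basis fourier_eq_L2_inner)
  finally show ?thesis .
qed

theorem mainTheorem13:
  fixes phi :: "complex \<Rightarrow> complex"
  assumes "Linf phi"
    and "\<exists>psi. Linf psi \<and> (\<forall>f. H2seq f \<longrightarrow> slantHankel phi f = slantHToeplitz psi f)"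
  shows "\<forall>h\<in>Hinf. l2inner phi (\<lambda>z. z + z ^ 3 * h z) = 0"
proof
  fix h assume h: "h \<in> Hinf"
  obtain psi where eq: "\<forall>f. H2seq f \<longrightarrow> slantHankel phi f = slantHToeplitz psi f"
    using assms(2) by blast
  have f: "bdd_measurable (\<lambda>t. phi (cis t))"
    using assms(1) by (simp add: Linf_iff_bdd_measurable)
  have coeff: "L2_inner (\<lambda>t. phi (cis t)) (fourier_basis n) = 2 * pi * fourier phi 1" if "n \<ge> 1" for n
    using fourier_constant_if_slantHankel_eq_slantHToeplitz[OF eq that] by (simp add: fourier_eq_L2_inner)
  then have "2 * pi * fourier phi 1 = 0"
    by (rule constant_fourier_coeffs_eq_0[OF f])
  have "L2_inner (\<lambda>t. phi (cis t)) (\<lambda>t. cis t + cis t ^ 3 * h (cis t)) = 0"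
  proof (rule L2_inner_eq_0_if_complementary_spectra[OF f, where S = "{1..}"])
    show "bdd_measurable (\<lambda>t. cis t + cis t ^ 3 * h (cis t))"
      using h by (simp add: bdd_measurable_z_plus_z3_Hinf)
    show "L2_inner (\<lambda>t. phi (cis t)) (fourier_basis n) = 0" if "n \<in> {1..}" for n
      using coeff that \<open>2 * pi * fourier phi 1 = 0\<close> by simp
    show "L2_inner (\<lambda>t. cis t + cis t ^ 3 * h (cis t)) (fourier_basis n) = 0" if "n \<notin> {1..}" for n
      using that by (simp add: L2_inner_z_plus_z3_Hinf_eq_0[OF h])
  qed
  then show "l2inner phi (\<lambda>z. z + z ^ 3 * h z) = 0"
    by (simp add: l2inner_eq_L2_inner)
qed

end
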